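(* Let $G$ be a graph with $n$ vertices and $m$ edges, and let $\mathbf{c}=(c_1,\ldots,c_s)$ be a composition of $n$ into $s$ positive parts; write $e_k=E_k(c_1,\ldots,c_s)$. Under a uniformly random $\mathbf{c}$-coloring of $G$, let $M_i(G)$ be the number of edges both of whose ends have color $i$ ($i\in[s]$), $M(G)=\sum_i M_i(G)$ the number of monochromatic edges and $L(G)=m-M(G)$ the number of edges whose ends receive different colors (so $L(G)$ and $M(G)$ have the same variance). Then for $i=1,\ldots,s$ the mean and variance of $M_i(G)$ are $$\overline{M}_i(G)=m\frac{(c_i)_2}{(n)_2},$$ $$\sigma_i^2(G)=\frac{(c_i)_3(n-c_i)}{(n)_4}\Sigma_2(G)-\Big(\Big[\frac{(c_i)_2}{(n)_2}\Big]^2-\frac{(c_i)_4}{(n)_4}\Big)m^2+\Big(\frac{(c_i)_2}{(n)_2}-2\frac{(c_i)_3}{(n)_3}+\frac{(c_i)_4}{(n)_4}\Big)m.$$ The means of $L(G)$ and $M(G)$ are $$\mathbb{E}[L(G)]=\frac{2me_2}{(n)_2},\qquad \mathbb{E}[M(G)]=\frac{m}{(n)_2}\sum_{i=1}^s(c_i)_2,$$ and their common variance is $$\sigma^2(G)=(a(\mathbf{c})-b(\mathbf{c}))\Sigma_2(G)+m^2\Big(b(\mathbf{c})-4\Big[\frac{e_2}{(n)_2}\Big]^2\Big)+m\Big(\frac{2e_2}{(n)_2}-2a(\mathbf{c})+b(\mathbf{c})\Big),$$ where $$a(\mathbf{c})=\frac{e_2}{(n)_2}+\frac{3e_3}{(n)_3},\qquad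 b(\mathbf{c})=\frac{4}{(n)_4}\big(e_2^2-(n-1)e_2-3e_3\big).$$
   Context: A $\mathbf{c}$-coloring is a surjective map $f:V(G)\to[s]$ with $|f^{-1}(i)|=c_i$ for each $i$; the set of such colorings carries the uniform probability measure. $\Sigma_2(G)$ is the sum of the squares of the vertex degrees of $G$. $(x)_b=x(x-1)\cdots(x-b+1)$ is the falling factorial ($(x)_0=1$, $(x)_b=0$ if $b>x$). $E_k(X_1,\ldots,X_s)=\sum_{A\subseteq[s],|A|=k}\prod_{i\in A}X_i$, with $E_0=1$ and $E_k=0$ for $k>s$. *)

theory Defs
  imports "HOL-Probability.Probability"
begin

definition ffact :: "real \<Rightarrow> nat \<Rightarrow> real" where
  "ffact x b = (\<Prod>j<b. x - real j)"

definition esym :: "nat \<Rightarrow> nat \<Rightarrow> (nat \<Rightarrow> real) \<Rightarrow> real" where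
  "esym k s X = (\<Sum>A\<in>{A. A \<subseteq> {1..s} \<and> card A = k}. \<Prod>i\<in>A. X i)"

definition simple_graph :: "'a set \<Rightarrow> 'a set set \<Rightarrow> bool" where
  "simple_graph V E \<longleftrightarrow> finite V \<and> (\<forall>e\<in>E. e \<subseteq> V \<and> card e = 2)"

definition degree :: "'a set set \<Rightarrow> 'a \<Rightarrow> nat" where
  "degree E v = card {e\<in>E. v \<in> e}"

definition Sigma2 :: "'a set \<Rightarrow> 'a set set \<Rightarrow> nat" where
  "Sigma2 V E = (\<Sum>v\<in>V. (degree E v)^2)"

definition composition :: "nat \<Rightarrow> nat \<Rightarrow> (nat \<Rightarrow> nat) \<Rightarrow> bool" where
  "composition n s c \<longleftrightarrow> (\<forall>i\<in>{1..s}. 0 < c i) \<and> (\<Sum>i=1..s. c i) = n"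

definition colorings :: "'a set \<Rightarrow> nat \<Rightarrow> (nat \<Rightarrow> nat) \<Rightarrow> ('a \<Rightarrow> nat) set" where
  "colorings V s c = {f. f \<in> V \<rightarrow>\<^sub>E {1..s} \<and> f ` V = {1..s} \<and>
      (\<forall>i\<in>{1..s}. card {v\<in>V. f v = i} = c i)}"

definition coloring_pmf :: "'a set \<Rightarrow> nat \<Rightarrow> (nat \<Rightarrow> nat) \<Rightarrow> ('a \<Rightarrow> nat) pmf" where
  "coloring_pmf V s c = pmf_of_set (colorings V s c)"

text \<open>M_i: edges both of whose ends have color i; M: monochromatic edges;
  L: edges whose ends receive different colors.\<close>
definition Mi :: "'a set set \<Rightarrow> nat \<Rightarrow> ('a \<Rightarrow> nat) \<Rightarrow> real" where
  "Mi E i f = real (card {e\<in>E. \<forall>v\<in>e. f v = i})"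

definition Mono :: "'a set set \<Rightarrow> ('a \<Rightarrow> nat) \<Rightarrow> real" where
  "Mono E f = real (card {e\<in>E. \<exists>i. \<forall>v\<in>e. f v = i})"

definition Bichr :: "'a set set \<Rightarrow> ('a \<Rightarrow> nat) \<Rightarrow> real" where
  "Bichr E f = real (card {e\<in>E. \<not> (\<exists>i. \<forall>v\<in>e. f v = i)})"

end

theory Submission
  imports Defs "HOL-Combinatorics.Permutations"
begin

text \<open>
  Write M_i as a sum over the edges of indicators of being monochromatic in color i.
  A uniform c-coloring is invariant under permutations of the vertices, so double counting
  shows that disjoint vertex sets W_1, W_2 receive only color i, resp. only color j \<noteq> i,
  with probability (c_i)_|W_1| (c_j)_|W_2| / (n)_(|W_1|+|W_2|). This gives the means at once.
  Second moments are sums over ordered pairs of edges, and the joint probability only depends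
  on the size 2, 3 or 4 of the union of the two edges; there are m, \<Sigma>_2 - 2m and
  m^2 + m - \<Sigma>_2 such pairs. For M one then sums over pairs of colors and expresses the
  resulting power sums of falling factorials through e_2 and e_3. Finally L = m - M has the
  variance of M.
\<close>

section \<open>Falling factorials and elementary symmetric polynomials\<close>

lemma ffact_0 [simp]: "ffact x 0 = 1"
  by (simp add: ffact_def)

lemma ffact_Suc: "ffact x (Suc k) = ffact x k * (x - real k)"
  by (simp add: ffact_def lessThan_Suc)

lemma ffact_2: "ffact x 2 = x * (x - 1)"
  by (simp add: ffact_def numeral_eq_Suc lessThan_Suc)

lemma ffact_3: "ffact x 3 = x * (x - 1) * (x - 2)"
  by (simp add: ffact_def numeral_eq_Suc lessThan_Suc)

lemma ffact_4: "ffact x 4 = x * (x - 1) * (x - 2) * (x - 3)"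
  by (simp add: ffact_def numeral_eq_Suc lessThan_Suc)

lemma ffact_add: "ffact x (a + b) = ffact x a * ffact (x - real a) b"
  by (induction b) (simp_all add: ffact_Suc algebra_simps)

lemma binomial_mult_fact_eq_ffact: "real (a choose k) * fact k = ffact (real a) k"
  by (simp add: binomial_gbinomial gbinomial_mult_fact' ffact_def atLeast0LessThan)

lemma ffact_pos: "k \<le> a \<Longrightarrow> ffact (real a) k > 0"
  by (metis binomial_mult_fact_eq_ffact fact_gt_zero mult_pos_pos of_nat_0_less_iff zero_less_binomial)

lemma ffact_3_div_diff_ffact_4_div:
  fixes x n :: real
  assumes "n \<ge> 4"
  shows "ffact x 3 / ffact n 3 - ffact x 4 / ffact n 4 = ffact x 3 * (n - x) / ffact n 4"
proof -
  have x4: "ffact x 4 = ffact x 3 * (x - 3)" and n4: "ffact n 4 = ffact n 3 * (n - 3)"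
    by (simp_all add: ffact_3 ffact_4)
  have "ffact n 3 \<noteq> 0" "n - 3 \<noteq> 0"
    using assms by (auto simp: ffact_3)
  then show ?thesis
    unfolding x4 n4 by (simp add: field_simps)
qed

lemma esym_0 [simp]: "esym 0 s X = 1"
proof -
  have "{A. A \<subseteq> {1..s} \<and> card A = 0} = {{}}" by (auto dest: finite_subset)
  then show ?thesis unfolding esym_def by simp
qed

lemma esym_Suc_0 [simp]: "esym (Suc k) 0 X = 0"
  by (simp add: esym_def)

lemma esym_Suc_Suc: "esym (Suc k) (Suc s) X = esym (Suc k) s X + X (Suc s) * esym k s X"
proof -
  let ?S = "\<lambda>k. {A. A \<subseteq> {1..s} \<and> card A = k}"
  have fin: "finite (?S k)" for k by (rule finite_subset[of _ "Pow {1..s}"]) auto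
  have split: "{A. A \<subseteq> {1..Suc s} \<and> card A = Suc k} = ?S (Suc k) \<union> insert (Suc s) ` ?S k"
  proof (intro equalityI subsetI)
    fix A assume A: "A \<in> {A. A \<subseteq> {1..Suc s} \<and> card A = Suc k}"
    then have "finite A" using finite_subset by blast
    with A show "A \<in> ?S (Suc k) \<union> insert (Suc s) ` ?S k"
      by (cases "Suc s \<in> A")
        (auto simp: le_Suc_eq subset_iff image_iff intro!: exI[of _ "A - {Suc s}"])
  qed (fastforce simp: subset_iff card_insert_if finite_subset[of _ "{1..s}"])
  have inj: "inj_on (insert (Suc s)) (?S k)"
    by (rule inj_onI) (metis atLeastAtMost_iff insert_ident mem_Collect_eq not_less_eq_eq order_refl subsetD)
  have "esym (Suc k) (Suc s) X = esym (Suc k) s X + (\<Sum>A\<in>insert (Suc s) ` ?S k. prod X A)"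
    unfolding esym_def split by (rule sum.union_disjoint) (use fin in auto)
  also have "(\<Sum>A\<in>insert (Suc s) ` ?S k. prod X A) = (\<Sum>A\<in>?S k. prod X (insert (Suc s) A))"
    by (rule sum.reindex[OF inj, unfolded comp_def])
  also have "(\<Sum>A\<in>?S k. prod X (insert (Suc s) A)) = (\<Sum>A\<in>?S k. X (Suc s) * prod X A)"
    by (intro sum.cong refl prod.insert) (auto dest: finite_subset)
  finally show ?thesis by (simp add: esym_def sum_distrib_left)
qed

lemma esym_1: "esym 1 s X = (\<Sum>i=1..s. X i)"
  by (induction s) (simp_all add: esym_Suc_Suc[of 0, simplified])

lemma esym_2: "esym 2 s X = ((\<Sum>i=1..s. X i) * ((\<Sum>i=1..s. X i) - 1) - (\<Sum>i=1..s. ffact (X i) 2)) / 2"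
proof (induction s)
  case (Suc s)
  have "esym 2 (Suc s) X = esym 2 s X + X (Suc s) * esym 1 s X"
    using esym_Suc_Suc[of 1 s X] by (simp add: numeral_2_eq_2)
  then show ?case
    unfolding Suc.IH esym_1 by (simp add: ffact_2 field_simps)
qed (simp add: esym_def)

lemma esym_3: "esym 3 s X = ((\<Sum>i=1..s. X i) * ((\<Sum>i=1..s. X i) - 1) * ((\<Sum>i=1..s. X i) - 2)
    - 3 * ((\<Sum>i=1..s. X i) - 2) * (\<Sum>i=1..s. ffact (X i) 2) + 2 * (\<Sum>i=1..s. ffact (X i) 3)) / 6"
proof (induction s)
  case (Suc s)
  have "esym 3 (Suc s) X = esym 3 s X + X (Suc s) * esym 2 s X"
    using esym_Suc_Suc[of 2 s X] by simp
  then show ?case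
    unfolding Suc.IH esym_2 by (simp add: ffact_2 ffact_3 field_simps)
qed (simp add: esym_def)

lemma esym_coefficients:
  fixes n p q :: real
  assumes "n \<ge> 4"
  defines "e2 \<equiv> (ffact n 2 - p) / 2"
    and "e3 \<equiv> (ffact n 3 - 3 * (n - 2) * p + 2 * q) / 6"
  shows "e2 / ffact n 2 = (1 - p / ffact n 2) / 2"
    and "e2 / ffact n 2 + 3 * e3 / ffact n 3 = 1 - 2 * (p / ffact n 2) + q / ffact n 3"
    and "4 / ffact n 4 * (e2\<^sup>2 - (n - 1) * e2 - 3 * e3)
           = (p\<^sup>2 - 4 * q - 2 * p) / ffact n 4 + 1 - 2 * (p / ffact n 2)"
proof -
  have nonzero: "ffact n 2 \<noteq> 0" "n - 2 \<noteq> 0" "n - 3 \<noteq> 0"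
    using assms by (auto simp: ffact_2)
  have n3: "ffact n 3 = ffact n 2 * (n - 2)" and n4: "ffact n 4 = ffact n 2 * ((n - 2) * (n - 3))"
    by (simp_all add: ffact_2 ffact_3 ffact_4)
  show "e2 / ffact n 2 = (1 - p / ffact n 2) / 2"
    using nonzero by (simp add: e2_def field_simps)
  show "e2 / ffact n 2 + 3 * e3 / ffact n 3 = 1 - 2 * (p / ffact n 2) + q / ffact n 3"
    unfolding e2_def e3_def n3 using nonzero by (simp add: field_simps)
  have "4 * (e2\<^sup>2 - (n - 1) * e2 - 3 * e3) = p\<^sup>2 - 4 * q - 2 * p + ffact n 4 - 2 * p * ((n - 2) * (n - 3))"
    unfolding e2_def e3_def ffact_2 ffact_3 ffact_4 by (simp add: field_simps power2_eq_square)
  then have "4 / ffact n 4 * (e2\<^sup>2 - (n - 1) * e2 - 3 * e3)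
      = (p\<^sup>2 - 4 * q - 2 * p + ffact n 4 - 2 * p * ((n - 2) * (n - 3))) / ffact n 4"
    by simp
  also have "\<dots> = (p\<^sup>2 - 4 * q - 2 * p) / ffact n 4 + 1 - 2 * (p / ffact n 2)"
  proof -
    have "(x + d * t - 2 * p * t) / (d * t) = x / (d * t) + 1 - 2 * (p / d)" if "d \<noteq> 0" "t \<noteq> 0"
      for x d t :: real
      using that by (simp add: field_simps)
    then show ?thesis
      unfolding n4 using nonzero by simp
  qed
  finally show "4 / ffact n 4 * (e2\<^sup>2 - (n - 1) * e2 - 3 * e3)
           = (p\<^sup>2 - 4 * q - 2 * p) / ffact n 4 + 1 - 2 * (p / ffact n 2)" .
qed

section \<open>Counting colorings\<close>

lemma sum_card_filter_swap:
  assumes "finite A" "finite B"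
  shows "(\<Sum>a\<in>A. card {b\<in>B. R a b}) = (\<Sum>b\<in>B. card {a\<in>A. R a b})"
proof -
  have "(\<Sum>a\<in>A. card {b\<in>B. R a b}) = (\<Sum>a\<in>A. \<Sum>b\<in>B. if R a b then 1 else 0)"
    using assms by (simp add: sum.inter_filter[symmetric])
  also have "\<dots> = (\<Sum>b\<in>B. \<Sum>a\<in>A. if R a b then 1 else 0)"
    by (rule sum.swap)
  also have "\<dots> = (\<Sum>b\<in>B. card {a\<in>A. R a b})"
    using assms by (simp add: sum.inter_filter[symmetric])
  finally show ?thesis .
qed

lemma ex_permutes_map_disjoint_pair:
  assumes "finite V" "x1 \<subseteq> V" "x2 \<subseteq> V" "x1 \<inter> x2 = {}" "y1 \<subseteq> V" "y2 \<subseteq> V"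
    "y1 \<inter> y2 = {}" "card y1 = card x1" "card y2 = card x2"
  shows "\<exists>\<pi>. \<pi> permutes V \<and> \<pi> ` y1 = x1 \<and> \<pi> ` y2 = x2"
proof -
  have fin: "finite x1" "finite x2" "finite y1" "finite y2"
    using assms finite_subset by metis+
  obtain g1 where g1: "bij_betw g1 y1 x1" using finite_same_card_bij fin assms by metis
  obtain g2 where g2: "bij_betw g2 y2 x2" using finite_same_card_bij fin assms by metis
  have "card (V - (y1 \<union> y2)) = card (V - (x1 \<union> x2))"
    using assms fin by (simp add: card_Diff_subset card_Un_disjoint)
  then obtain g3 where g3: "bij_betw g3 (V - (y1 \<union> y2)) (V - (x1 \<union> x2))"
    using finite_same_card_bij assms by (metis finite_Diff)
  define \<pi> where
    "\<pi> v = (if v \<in> y1 then g1 v else if v \<in> y2 then g2 v else if v \<in> V then g3 v else v)" for v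
  have "bij_betw \<pi> y1 x1" using g1 by (subst bij_betw_cong[of _ _ g1]) (auto simp: \<pi>_def)
  moreover have "bij_betw \<pi> y2 x2" using g2 assms(7) by (subst bij_betw_cong[of _ _ g2]) (auto simp: \<pi>_def)
  moreover have "bij_betw \<pi> (V - (y1 \<union> y2)) (V - (x1 \<union> x2))"
    using g3 by (subst bij_betw_cong[of _ _ g3]) (auto simp: \<pi>_def)
  ultimately have "bij_betw \<pi> (y1 \<union> y2 \<union> (V - (y1 \<union> y2))) (x1 \<union> x2 \<union> (V - (x1 \<union> x2)))"
    by (intro bij_betw_combine) (use assms in auto)
  moreover have "y1 \<union> y2 \<union> (V - (y1 \<union> y2)) = V" "x1 \<union> x2 \<union> (V - (x1 \<union> x2)) = V"
    using assms by auto
  ultimately have "\<pi> permutes V"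
    by (intro bij_imp_permutes) (auto simp: \<pi>_def)
  moreover have "\<pi> ` y1 = x1" "\<pi> ` y2 = x2"
    using \<open>bij_betw \<pi> y1 x1\<close> \<open>bij_betw \<pi> y2 x2\<close> by (simp_all add: bij_betw_def)
  ultimately show ?thesis by blast
qed

definition disjoint_pairs :: "'a set \<Rightarrow> nat \<Rightarrow> nat \<Rightarrow> ('a set \<times> 'a set) set" where
  "disjoint_pairs V k1 k2 =
     {(W1, W2). W1 \<subseteq> V \<and> W2 \<subseteq> V \<and> W1 \<inter> W2 = {} \<and> card W1 = k1 \<and> card W2 = k2}"

lemma finite_disjoint_pairs: "finite V \<Longrightarrow> finite (disjoint_pairs V k1 k2)"
  by (rule finite_subset[of _ "Pow V \<times> Pow V"]) (auto simp: disjoint_pairs_def)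

lemma card_disjoint_pairs:
  assumes "finite V"
  shows "card (disjoint_pairs V k1 k2) = (card V choose k1) * ((card V - k1) choose k2)"
proof -
  let ?K = "{W1. W1 \<subseteq> V \<and> card W1 = k1}"
  have "disjoint_pairs V k1 k2 = Sigma ?K (\<lambda>W1. {W2. W2 \<subseteq> V - W1 \<and> card W2 = k2})"
    unfolding disjoint_pairs_def by auto
  then have "card (disjoint_pairs V k1 k2) = (\<Sum>W1\<in>?K. card {W2. W2 \<subseteq> V - W1 \<and> card W2 = k2})"
    using assms by (simp add: card_SigmaI)
  also have "\<dots> = (\<Sum>W1\<in>?K. (card V - k1) choose k2)"
  proof (intro sum.cong refl)
    fix W1 assume "W1 \<in> ?K"
    then have "card (V - W1) = card V - k1"
      using assms by (auto simp: card_Diff_subset finite_subset)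
    then show "card {W2. W2 \<subseteq> V - W1 \<and> card W2 = k2} = (card V - k1) choose k2"
      using assms by (simp add: n_subsets)
  qed
  finally show ?thesis
    using n_subsets[OF assms, of k1] by simp
qed

definition colored_on :: "nat \<Rightarrow> nat \<Rightarrow> 'a set \<times> 'a set \<Rightarrow> ('a \<Rightarrow> nat) \<Rightarrow> bool" where
  "colored_on i j W f \<longleftrightarrow> (\<forall>v\<in>fst W. f v = i) \<and> (\<forall>v\<in>snd W. f v = j)"

locale coloring_space =
  fixes V :: "'a set" and s :: nat and c :: "nat \<Rightarrow> nat"
  assumes finite_V: "finite V" and composition: "composition (card V) s c"
begin

lemma coloring_range: "f \<in> colorings V s c \<Longrightarrow> v \<in> V \<Longrightarrow> f v \<in> {1..s}"
  unfolding colorings_def by auto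

lemma card_color_class: "f \<in> colorings V s c \<Longrightarrow> i \<in> {1..s} \<Longrightarrow> card {v\<in>V. f v = i} = c i"
  unfolding colorings_def by auto

lemma coloring_extensional: "f \<in> colorings V s c \<Longrightarrow> v \<notin> V \<Longrightarrow> f v = undefined"
  unfolding colorings_def by (auto simp: PiE_def extensional_def)

lemma finite_colorings: "finite (colorings V s c)"
  by (rule finite_subset[of _ "V \<rightarrow>\<^sub>E {1..s}"]) (auto simp: colorings_def finite_V finite_PiE)

lemma colorings_nonempty: "colorings V s c \<noteq> {}"
proof -
  define T where "T = (SIGMA i:{1..s}. {..<c i})"
  have "card T = card V"
    using composition by (simp add: T_def composition_def)
  then obtain g where g: "bij_betw g V T"
    using finite_same_card_bij finite_V by (metis T_def finite_SigmaI finite_atLeastAtMost finite_lessThan)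
  define f where "f v = (if v \<in> V then fst (g v) else undefined)" for v
  have class_card: "card {v\<in>V. f v = i} = c i" if "i \<in> {1..s}" for i
  proof -
    have "g ` {v\<in>V. f v = i} = {t\<in>T. fst t = i}"
      using bij_betw_imp_surj_on[OF g] by (force simp: f_def)
    also have "\<dots> = {i} \<times> {..<c i}"
      using that by (auto simp: T_def)
    finally have "bij_betw g {v\<in>V. f v = i} ({i} \<times> {..<c i})"
      by (rule bij_betw_subset[OF g, rotated]) auto
    then show ?thesis by (simp add: bij_betw_same_card)
  qed
  have "f \<in> V \<rightarrow>\<^sub>E {1..s}"
  proof (rule PiE_I)
    fix v assume "v \<in> V"
    then have "g v \<in> T" using bij_betwE[OF g] by blast
    then show "f v \<in> {1..s}" using \<open>v \<in> V\<close> by (cases "g v") (simp add: f_def T_def)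
  qed (simp add: f_def)
  moreover have "f ` V = {1..s}"
  proof
    show "{1..s} \<subseteq> f ` V"
    proof
      fix i assume i: "i \<in> {1..s}"
      then have "card {v\<in>V. f v = i} \<noteq> 0"
        using class_card composition by (simp add: composition_def)
      then show "i \<in> f ` V" by (metis (mono_tags, lifting) card.empty empty_Collect_eq image_eqI)
    qed
  qed (use \<open>f \<in> V \<rightarrow>\<^sub>E {1..s}\<close> in auto)
  ultimately have "f \<in> colorings V s c"
    using class_card unfolding colorings_def by blast
  then show ?thesis by blast
qed

lemma comp_permutes_in_colorings:
  assumes \<pi>: "\<pi> permutes V" and f: "f \<in> colorings V s c"
  shows "f \<circ> \<pi> \<in> colorings V s c"
proof -
  have "f \<circ> \<pi> \<in> V \<rightarrow>\<^sub>E {1..s}"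
  proof (rule PiE_I)
    show "(f \<circ> \<pi>) v \<in> {1..s}" if "v \<in> V" for v
      using coloring_range[OF f, of "\<pi> v"] permutes_in_image[OF \<pi>, of v] that by simp
    show "(f \<circ> \<pi>) v = undefined" if "v \<notin> V" for v
      using coloring_extensional[OF f that] permutes_not_in[OF \<pi> that] by simp
  qed
  moreover have "(f \<circ> \<pi>) ` V = {1..s}"
    using f by (simp only: image_comp[symmetric] permutes_image[OF \<pi>] colorings_def mem_Collect_eq)
  moreover have "card {v\<in>V. (f \<circ> \<pi>) v = i} = c i" if i: "i \<in> {1..s}" for i
  proof -
    have "\<pi> ` {v\<in>V. (f \<circ> \<pi>) v = i} = {u\<in>\<pi> ` V. f u = i}"
      by auto
    then have "bij_betw \<pi> {v\<in>V. (f \<circ> \<pi>) v = i} {v\<in>V. f v = i}"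
      by (intro bij_betw_subset[OF permutes_imp_bij[OF \<pi>]]) (auto simp: permutes_image[OF \<pi>])
    then show ?thesis
      using card_color_class[OF f i] by (simp add: bij_betw_same_card)
  qed
  ultimately show ?thesis
    unfolding colorings_def by blast
qed

lemma card_colored_on_invariant:
  assumes "W \<in> disjoint_pairs V k1 k2" "W' \<in> disjoint_pairs V k1 k2"
  shows "card {f\<in>colorings V s c. colored_on i j W f} = card {f\<in>colorings V s c. colored_on i j W' f}"
proof -
  have le: "card {f\<in>colorings V s c. colored_on i j X f} \<le> card {f\<in>colorings V s c. colored_on i j Y f}"
    if X: "X \<in> disjoint_pairs V k1 k2" and Y: "Y \<in> disjoint_pairs V k1 k2" for X Y
  proof -
    obtain \<pi> where \<pi>: "\<pi> permutes V" "\<pi> ` fst Y = fst X" "\<pi> ` snd Y = snd X"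
      using ex_permutes_map_disjoint_pair[OF finite_V, of "fst X" "snd X" "fst Y" "snd Y"] X Y
      by (auto simp: disjoint_pairs_def)
    have "(\<lambda>f. f \<circ> \<pi>) ` {f\<in>colorings V s c. colored_on i j X f}
        \<subseteq> {f\<in>colorings V s c. colored_on i j Y f}"
    proof (rule image_subsetI)
      fix f assume f: "f \<in> {f\<in>colorings V s c. colored_on i j X f}"
      have "\<pi> v \<in> fst X" if "v \<in> fst Y" for v using \<pi>(2) that by blast
      moreover have "\<pi> v \<in> snd X" if "v \<in> snd Y" for v using \<pi>(3) that by blast
      ultimately show "f \<circ> \<pi> \<in> {f\<in>colorings V s c. colored_on i j Y f}"
        using f comp_permutes_in_colorings[OF \<pi>(1)] by (auto simp: colored_on_def)
    qed
    moreover have "inj (\<lambda>f :: 'a \<Rightarrow> nat. f \<circ> \<pi>)"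
    proof (rule injI)
      fix f g :: "'a \<Rightarrow> nat" assume "f \<circ> \<pi> = g \<circ> \<pi>"
      then have "f (\<pi> (inv \<pi> u)) = g (\<pi> (inv \<pi> u))" for u by (metis comp_apply)
      then show "f = g" by (simp add: permutes_inverses(1)[OF \<pi>(1)] ext)
    qed
    ultimately show ?thesis
      using finite_colorings by (intro card_inj_on_le[of "\<lambda>f. f \<circ> \<pi>"]) (auto intro: inj_on_subset)
  qed
  show ?thesis using le[OF assms] le[OF assms(2,1)] by (rule antisym)
qed

lemma card_colored_on_pairs:
  assumes f: "f \<in> colorings V s c" and i: "i \<in> {1..s}" and j: "k2 \<noteq> 0 \<Longrightarrow> j \<in> {1..s} - {i}"
  shows "card {W\<in>disjoint_pairs V k1 k2. colored_on i j W f} = (c i choose k1) * (c j choose k2)"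
proof -
  have j': "j \<in> {1..s} - {i}" if "W2 \<subseteq> V" "W2 \<noteq> {}" "card W2 = k2" for W2
  proof -
    have "k2 \<noteq> 0" using that finite_subset[OF that(1) finite_V] by auto
    then show ?thesis by (rule j)
  qed
  have "{W\<in>disjoint_pairs V k1 k2. colored_on i j W f} =
      {W1. W1 \<subseteq> {v\<in>V. f v = i} \<and> card W1 = k1} \<times> {W2. W2 \<subseteq> {v\<in>V. f v = j} \<and> card W2 = k2}"
  proof (intro equalityI subsetI)
    fix W
    assume "W \<in> {W1. W1 \<subseteq> {v\<in>V. f v = i} \<and> card W1 = k1}
      \<times> {W2. W2 \<subseteq> {v\<in>V. f v = j} \<and> card W2 = k2}"
    then obtain W1 W2 where W: "W = (W1, W2)" "W1 \<subseteq> {v\<in>V. f v = i}" "card W1 = k1"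
      "W2 \<subseteq> {v\<in>V. f v = j}" "card W2 = k2" by blast
    have "W1 \<inter> W2 = {}"
    proof (cases "W2 = {}")
      case False
      then have "j \<noteq> i" using j' W by blast
      then show ?thesis using W by blast
    qed simp
    then show "W \<in> {W\<in>disjoint_pairs V k1 k2. colored_on i j W f}"
      using W by (auto simp: disjoint_pairs_def colored_on_def)
  qed (auto simp: disjoint_pairs_def colored_on_def)
  then have "card {W\<in>disjoint_pairs V k1 k2. colored_on i j W f} =
      (card {v\<in>V. f v = i} choose k1) * (card {v\<in>V. f v = j} choose k2)"
    by (simp add: card_cartesian_product n_subsets finite_V)
  then show ?thesis
    using card_color_class[OF f] i j by (cases "k2 = 0") auto
qed

lemma card_colored_on_mult:
  assumes W: "W \<in> disjoint_pairs V k1 k2"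
    and i: "i \<in> {1..s}" and j: "k2 \<noteq> 0 \<Longrightarrow> j \<in> {1..s} - {i}"
  shows "card {f\<in>colorings V s c. colored_on i j W f} * card (disjoint_pairs V k1 k2)
       = card (colorings V s c) * ((c i choose k1) * (c j choose k2))"
proof -
  have "card {f\<in>colorings V s c. colored_on i j W f} * card (disjoint_pairs V k1 k2)
      = (\<Sum>W'\<in>disjoint_pairs V k1 k2. card {f\<in>colorings V s c. colored_on i j W f})"
    by simp
  also have "\<dots> = (\<Sum>W'\<in>disjoint_pairs V k1 k2. card {f\<in>colorings V s c. colored_on i j W' f})"
    by (intro sum.cong refl card_colored_on_invariant[OF W])
  also have "\<dots> = (\<Sum>f\<in>colorings V s c. card {W'\<in>disjoint_pairs V k1 k2. colored_on i j W' f})"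
    by (rule sum_card_filter_swap[OF finite_disjoint_pairs[OF finite_V] finite_colorings])
  also have "\<dots> = card (colorings V s c) * ((c i choose k1) * (c j choose k2))"
    using card_colored_on_pairs[OF _ i j] by simp
  finally show ?thesis .
qed

lemma prob_coloring_pmf:
  "measure_pmf.prob (coloring_pmf V s c) A = card (colorings V s c \<inter> A) / card (colorings V s c)"
  unfolding coloring_pmf_def by (rule measure_pmf_of_set[OF colorings_nonempty finite_colorings])

lemma prob_colored_on:
  assumes W: "W1 \<subseteq> V" "W2 \<subseteq> V" "W1 \<inter> W2 = {}"
    and i: "i \<in> {1..s}" and j: "W2 \<noteq> {} \<Longrightarrow> j \<in> {1..s} - {i}"
  shows "measure_pmf.prob (coloring_pmf V s c) {f. (\<forall>v\<in>W1. f v = i) \<and> (\<forall>v\<in>W2. f v = j)}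
       = ffact (c i) (card W1) * ffact (c j) (card W2) / ffact (card V) (card W1 + card W2)"
proof -
  define k1 k2 where "k1 = card W1" and "k2 = card W2"
  have fin: "finite W1" "finite W2" using W(1,2) finite_subset finite_V by blast+
  have count: "card {f\<in>colorings V s c. colored_on i j (W1, W2) f} * card (disjoint_pairs V k1 k2)
       = card (colorings V s c) * ((c i choose k1) * (c j choose k2))"
    by (rule card_colored_on_mult) (use W i j fin in \<open>auto simp: disjoint_pairs_def k1_def k2_def\<close>)
  have "k1 + k2 \<le> card V"
    using card_mono[OF finite_V, of "W1 \<union> W2"] W fin by (simp add: card_Un_disjoint k1_def k2_def)
  then have "ffact (card V) (k1 + k2) = ffact (card V) k1 * ffact (card V - k1) k2"
    by (simp add: ffact_add of_nat_diff)
  also have "\<dots> = real (card (disjoint_pairs V k1 k2)) * (fact k1 * fact k2)"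
    by (simp only: card_disjoint_pairs[OF finite_V] binomial_mult_fact_eq_ffact[symmetric] of_nat_mult ac_simps)
  finally have pairs: "real (card (disjoint_pairs V k1 k2)) * (fact k1 * fact k2) = ffact (card V) (k1 + k2)" ..
  have colors: "real ((c i choose k1) * (c j choose k2)) * (fact k1 * fact k2) = ffact (c i) k1 * ffact (c j) k2"
    by (simp add: binomial_mult_fact_eq_ffact[symmetric])
  have "real (card {f\<in>colorings V s c. colored_on i j (W1, W2) f}) * ffact (card V) (k1 + k2)
      = real (card (colorings V s c)) * (ffact (c i) k1 * ffact (c j) k2)"
    unfolding pairs[symmetric] colors[symmetric] using arg_cong[OF count, of real]
    by (simp only: of_nat_mult mult.assoc[symmetric])
  moreover have "ffact (card V) (k1 + k2) > 0"
    using \<open>k1 + k2 \<le> card V\<close> by (rule ffact_pos)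
  moreover have "card (colorings V s c) > 0"
    using colorings_nonempty finite_colorings by (simp add: card_gt_0_iff)
  moreover have "colorings V s c \<inter> {f. (\<forall>v\<in>W1. f v = i) \<and> (\<forall>v\<in>W2. f v = j)}
      = {f\<in>colorings V s c. colored_on i j (W1, W2) f}"
    by (auto simp: colored_on_def)
  ultimately show ?thesis
    by (simp add: prob_coloring_pmf k1_def[symmetric] k2_def[symmetric] field_simps)
qed

lemma prob_monochromatic:
  assumes "W \<subseteq> V" "i \<in> {1..s}"
  shows "measure_pmf.prob (coloring_pmf V s c) {f. \<forall>v\<in>W. f v = i} = ffact (c i) (card W) / ffact (card V) (card W)"
  using prob_colored_on[of W "{}" i i] assms by simp

lemma set_pmf_coloring_pmf [simp]: "set_pmf (coloring_pmf V s c) = colorings V s c"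
  unfolding coloring_pmf_def by (rule set_pmf_of_set[OF colorings_nonempty finite_colorings])

lemma integrable_coloring_pmf [simp]:
  fixes F :: "('a \<Rightarrow> nat) \<Rightarrow> real"
  shows "integrable (measure_pmf (coloring_pmf V s c)) F"
  by (rule integrable_measure_pmf_finite) (simp add: finite_colorings)

lemma expectation_coloring_pmf_cong:
  fixes F G :: "('a \<Rightarrow> nat) \<Rightarrow> real"
  assumes "\<And>f. f \<in> colorings V s c \<Longrightarrow> F f = G f"
  shows "measure_pmf.expectation (coloring_pmf V s c) F = measure_pmf.expectation (coloring_pmf V s c) G"
  using assms by (intro integral_cong_AE) (auto intro!: AE_pmfI)

lemma variance_coloring_pmf:
  fixes F :: "('a \<Rightarrow> nat) \<Rightarrow> real"
  shows "measure_pmf.variance (coloring_pmf V s c) F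
    = measure_pmf.expectation (coloring_pmf V s c) (\<lambda>f. F f * F f)
      - (measure_pmf.expectation (coloring_pmf V s c) F)\<^sup>2"
  using measure_pmf.variance_eq[of "coloring_pmf V s c" F] by (simp add: power2_eq_square)

end

lemma (in prob_space) variance_const_diff:
  fixes X :: "'a \<Rightarrow> real"
  assumes "integrable M X"
  shows "variance (\<lambda>x. k - X x) = variance X"
proof -
  have "expectation (\<lambda>x. k - X x) = k - expectation X"
    using assms by (simp add: prob_space)
  then have "(\<lambda>x. (k - X x - expectation (\<lambda>x. k - X x))\<^sup>2) = (\<lambda>x. (X x - expectation X)\<^sup>2)"
    by (simp add: power2_commute)
  then show ?thesis by simp
qed

section \<open>Pairs of edges\<close>

lemma finite_edges: "simple_graph V E \<Longrightarrow> finite E"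
  unfolding simple_graph_def by (metis Pow_iff finite_Pow_iff rev_finite_subset subsetI)

lemma
  assumes "simple_graph V E" "e \<in> E"
  shows card_edge: "card e = 2" and finite_edge: "finite e" and edge_subset: "e \<subseteq> V"
  using assms by (auto simp: simple_graph_def intro: card_ge_0_finite)

lemma card_Un_Int_edges:
  assumes "simple_graph V E" "e \<in> E" "e' \<in> E"
  shows "card (e \<union> e') + card (e \<inter> e') = 4"
    and "card (e \<union> e') = 2 \<longleftrightarrow> e = e'"
proof -
  have e: "finite e" "card e = 2" and e': "finite e'" "card e' = 2"
    using assms card_edge finite_edge by blast+
  then show "card (e \<union> e') + card (e \<inter> e') = 4"
    using card_Un_Int[of e e'] by linarith
  show "card (e \<union> e') = 2 \<longleftrightarrow> e = e'"
  proof
    assume "card (e \<union> e') = 2"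
    then have "e = e \<union> e'" "e' = e \<union> e'"
      using e e' by (metis Un_upper1 Un_upper2 card_subset_eq finite_Un)+
    then show "e = e'" by simp
  qed (use e in simp)
qed

lemma Sigma2_eq_sum_card_Int:
  assumes G: "simple_graph V E"
  shows "Sigma2 V E = (\<Sum>(e, e')\<in>E \<times> E. card (e \<inter> e'))"
proof -
  have V: "finite V" using G by (simp add: simple_graph_def)
  have EV: "\<And>e. e \<in> E \<Longrightarrow> e \<subseteq> V" and fE: "finite E"
    using G edge_subset finite_edges by blast+
  have "Sigma2 V E = (\<Sum>v\<in>V. card {p\<in>E \<times> E. v \<in> fst p \<inter> snd p})"
    unfolding Sigma2_def degree_def
  proof (intro sum.cong refl)
    fix v
    have "{p\<in>E \<times> E. v \<in> fst p \<inter> snd p} = {e\<in>E. v \<in> e} \<times> {e\<in>E. v \<in> e}" by auto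
    then show "card {e\<in>E. v \<in> e} ^ 2 = card {p\<in>E \<times> E. v \<in> fst p \<inter> snd p}"
      by (simp add: card_cartesian_product power2_eq_square)
  qed
  also have "\<dots> = (\<Sum>p\<in>E \<times> E. card {v\<in>V. v \<in> fst p \<inter> snd p})"
    using V fE by (intro sum_card_filter_swap) auto
  also have "\<dots> = (\<Sum>(e, e')\<in>E \<times> E. card (e \<inter> e'))"
  proof (intro sum.cong refl)
    fix p assume "p \<in> E \<times> E"
    then have "{v\<in>V. v \<in> fst p \<inter> snd p} = fst p \<inter> snd p" by (auto dest!: EV)
    then show "card {v\<in>V. v \<in> fst p \<inter> snd p} = (case p of (e, e') \<Rightarrow> card (e \<inter> e'))"
      by (simp add: case_prod_unfold)
  qed
  finally show ?thesis .
qed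

lemma sum_edge_pairs_card_Un:
  fixes g :: "nat \<Rightarrow> real"
  assumes G: "simple_graph V E"
  shows "(\<Sum>(e, e')\<in>E \<times> E. g (card (e \<union> e'))) =
     real (card E) * g 2 + (real (Sigma2 V E) - 2 * real (card E)) * g 3
     + (real (card E) ^ 2 + real (card E) - real (Sigma2 V E)) * g 4"
proof -
  have fE: "finite E"
    using G by (rule finite_edges)
  \<comment> \<open>Two edges share 0, 1 or 2 vertices, and share 2 exactly when they coincide.\<close>
  have pointwise: "g (card (e \<union> e')) = g 4 + (g 3 - g 4) * real (card (e \<inter> e'))
      + (g 2 - 2 * g 3 + g 4) * (if e = e' then 1 else 0)" if "e \<in> E" "e' \<in> E" for e e'
  proof -
    have "finite e" "card e = 2"
      using G that card_edge finite_edge by blast+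
    then have "card (e \<inter> e') \<le> 2"
      using card_mono[OF _ Int_lower1, of e e'] by simp
    then consider "card (e \<inter> e') = 0" | "card (e \<inter> e') = 1" | "card (e \<inter> e') = 2" by linarith
    then show ?thesis
      using card_Un_Int_edges[OF G that] by cases (auto simp: algebra_simps)
  qed
  have "(\<Sum>(e, e')\<in>E \<times> E. g (card (e \<union> e'))) =
      (\<Sum>(e, e')\<in>E \<times> E. g 4 + (g 3 - g 4) * real (card (e \<inter> e'))
        + (g 2 - 2 * g 3 + g 4) * (if e = e' then 1 else 0))"
    using pointwise by (intro sum.cong refl) auto
  also have "\<dots> = g 4 * real (card (E \<times> E)) + (g 3 - g 4) * (\<Sum>(e, e')\<in>E \<times> E. real (card (e \<inter> e')))
      + (g 2 - 2 * g 3 + g 4) * (\<Sum>(e, e')\<in>E \<times> E. if e = e' then 1 else 0)"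
    by (simp add: case_prod_unfold sum.distrib sum_distrib_left)
  also have "(\<Sum>(e, e')\<in>E \<times> E. real (card (e \<inter> e'))) = real (Sigma2 V E)"
    unfolding Sigma2_eq_sum_card_Int[OF G] by (simp add: case_prod_unfold)
  also have "(\<Sum>(e, e')\<in>E \<times> E. if e = e' then 1 else 0) = real (card E)"
    unfolding sum.cartesian_product[symmetric] using fE by simp
  finally show ?thesis by (simp add: card_cartesian_product power2_eq_square algebra_simps)
qed

section \<open>Moments of the color counts\<close>

text \<open>
  The probability that two edges whose union has u vertices are monochromatic in colors i and j
  respectively; for i \<noteq> j this forces the edges to be disjoint, i.e. u = 4.
\<close>

definition edge_pair_prob :: "real \<Rightarrow> (nat \<Rightarrow> nat) \<Rightarrow> nat \<Rightarrow> nat \<Rightarrow> nat \<Rightarrow> real" where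
  "edge_pair_prob n c i j u =
     (if i = j then ffact (c i) u / ffact n u
      else if u = 4 then ffact (c i) 2 * ffact (c j) 2 / ffact n 4 else 0)"

lemma sum_edge_pair_prob_ne_4:
  assumes "u \<noteq> 4"
  shows "(\<Sum>i=1..s. \<Sum>j=1..s. edge_pair_prob n c i j u) = (\<Sum>i=1..s. ffact (c i) u) / ffact n u"
proof -
  have "edge_pair_prob n c i j u = (if i = j then ffact (c i) u / ffact n u else 0)" for i j
    using assms by (simp add: edge_pair_prob_def)
  then show ?thesis by (simp add: sum_divide_distrib)
qed

lemma sum_edge_pair_prob_4:
  "(\<Sum>i=1..s. \<Sum>j=1..s. edge_pair_prob n c i j 4)
     = ((\<Sum>i=1..s. ffact (c i) 2)\<^sup>2 - 4 * (\<Sum>i=1..s. ffact (c i) 3) - 2 * (\<Sum>i=1..s. ffact (c i) 2)) / ffact n 4"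
proof -
  have diagonal: "ffact x 4 / d = ffact x 2 * ffact x 2 / d + (- 4 * ffact x 3 - 2 * ffact x 2) / d"
    for x d :: real
    by (simp add: ffact_2 ffact_3 ffact_4 add_divide_distrib[symmetric] algebra_simps)
  have "edge_pair_prob n c i j 4 = ffact (c i) 2 * ffact (c j) 2 / ffact n 4
      + (if i = j then (- 4 * ffact (c i) 3 - 2 * ffact (c i) 2) / ffact n 4 else 0)" for i j
    by (cases "i = j") (simp_all add: edge_pair_prob_def diagonal)
  then have "(\<Sum>i=1..s. \<Sum>j=1..s. edge_pair_prob n c i j 4)
      = (\<Sum>i=1..s. ffact (c i) 2)\<^sup>2 / ffact n 4 + (\<Sum>i=1..s. (- 4 * ffact (c i) 3 - 2 * ffact (c i) 2) / ffact n 4)"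
    by (simp add: sum.distrib power2_eq_square sum_product sum_divide_distrib)
  then show ?thesis
    by (simp add: sum_divide_distrib[symmetric] sum_subtractf sum_negf sum_distrib_left diff_divide_distrib)
qed

locale colored_graph = coloring_space V s c for V :: "'a set" and s c +
  fixes E :: "'a set set"
  assumes graph: "simple_graph V E"
begin

lemma Mi_eq_sum_indicator: "Mi E i f = (\<Sum>e\<in>E. indicator {f. \<forall>v\<in>e. f v = i} f)"
  using finite_edges[OF graph] by (simp add: Mi_def indicator_def sum.inter_filter[symmetric] Collect_conj_eq)

lemma Mono_eq_sum_Mi:
  assumes f: "f \<in> colorings V s c"
  shows "Mono E f = (\<Sum>i=1..s. Mi E i f)"
proof -
  have "{e\<in>E. \<exists>i. \<forall>v\<in>e. f v = i} = (\<Union>i\<in>{1..s}. {e\<in>E. \<forall>v\<in>e. f v = i})"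
  proof (intro equalityI subsetI)
    fix e assume e: "e \<in> {e\<in>E. \<exists>i. \<forall>v\<in>e. f v = i}"
    then obtain i where i: "\<forall>v\<in>e. f v = i" by blast
    from e have "e \<noteq> {}" "e \<subseteq> V"
      using card_edge[OF graph] edge_subset[OF graph] by fastforce+
    then obtain v where "v \<in> e" "v \<in> V" by blast
    then have "i \<in> {1..s}"
      using i coloring_range[OF f] by metis
    then show "e \<in> (\<Union>i\<in>{1..s}. {e\<in>E. \<forall>v\<in>e. f v = i})" using e i by blast
  qed blast
  moreover have "{e\<in>E. \<forall>v\<in>e. f v = i} \<inter> {e\<in>E. \<forall>v\<in>e. f v = j} = {}" if "i \<noteq> j" for i j
  proof -
    have nonempty: "e \<noteq> {}" if "e \<in> E" for e using card_edge[OF graph that] by auto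
    show ?thesis
    proof (rule equals0I)
      fix e assume "e \<in> {e\<in>E. \<forall>v\<in>e. f v = i} \<inter> {e\<in>E. \<forall>v\<in>e. f v = j}"
      then obtain v where "f v = i" "f v = j" using nonempty by blast
      then show False using that by simp
    qed
  qed
  ultimately show ?thesis
    using finite_edges[OF graph] by (simp add: Mono_def Mi_def card_UN_disjoint)
qed

lemma Bichr_eq_diff_Mono: "Bichr E f = real (card E) - Mono E f"
proof -
  have "{e\<in>E. \<not> (\<exists>i. \<forall>v\<in>e. f v = i)} = E - {e\<in>E. \<exists>i. \<forall>v\<in>e. f v = i}" by blast
  then show ?thesis
    using finite_edges[OF graph] by (simp add: Bichr_def Mono_def card_Diff_subset card_mono of_nat_diff)
qed

lemma prob_edge_pair:
  assumes e: "e \<in> E" "e' \<in> E" and ij: "i \<in> {1..s}" "j \<in> {1..s}"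
  shows "measure_pmf.prob (coloring_pmf V s c) {f. (\<forall>v\<in>e. f v = i) \<and> (\<forall>v\<in>e'. f v = j)}
       = edge_pair_prob (card V) c i j (card (e \<union> e'))"
proof (cases "i = j")
  case True
  have "{f. (\<forall>v\<in>e. f v = i) \<and> (\<forall>v\<in>e'. f v = j)} = {f. \<forall>v\<in>e \<union> e'. f v = i}"
    using True by auto
  then show ?thesis
    using prob_monochromatic[of "e \<union> e'" i] edge_subset[OF graph] e ij True
    by (simp add: edge_pair_prob_def)
next
  case False
  show ?thesis
  proof (cases "e \<inter> e' = {}")
    case True
    then have "card (e \<union> e') = 4"
      using card_Un_Int_edges(1)[OF graph e] by simp
    then show ?thesis
      using prob_colored_on[of e e' i j] edge_subset[OF graph] card_edge[OF graph] e ij True False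
      by (simp add: edge_pair_prob_def)
  next
    case meet: False
    then have "card (e \<union> e') \<noteq> 4"
      using card_Un_Int_edges(1)[OF graph e] finite_edge[OF graph] e by fastforce
    moreover have empty: "{f. (\<forall>v\<in>e. f v = i) \<and> (\<forall>v\<in>e'. f v = j)} = {}"
      using meet False by auto
    ultimately show ?thesis
      unfolding empty using False by (simp add: edge_pair_prob_def)
  qed
qed

lemma expectation_Mi:
  assumes i: "i \<in> {1..s}"
  shows "measure_pmf.expectation (coloring_pmf V s c) (Mi E i) = real (card E) * ffact (c i) 2 / ffact (card V) 2"
proof -
  have "Mi E i = (\<lambda>f. \<Sum>e\<in>E. indicator {f. \<forall>v\<in>e. f v = i} f)"
    using Mi_eq_sum_indicator by blast
  then have "measure_pmf.expectation (coloring_pmf V s c) (Mi E i)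
      = (\<Sum>e\<in>E. measure_pmf.prob (coloring_pmf V s c) {f. \<forall>v\<in>e. f v = i})"
    by simp
  also have "\<dots> = (\<Sum>e\<in>E. ffact (c i) 2 / ffact (card V) 2)"
    using prob_monochromatic[OF edge_subset[OF graph] i] card_edge[OF graph] by simp
  finally show ?thesis by simp
qed

lemma expectation_Mi_mult:
  assumes i: "i \<in> {1..s}" and j: "j \<in> {1..s}"
  defines "g \<equiv> edge_pair_prob (card V) c i j"
  shows "measure_pmf.expectation (coloring_pmf V s c) (\<lambda>f. Mi E i f * Mi E j f)
     = real (card E) * g 2 + (real (Sigma2 V E) - 2 * real (card E)) * g 3
       + (real (card E) ^ 2 + real (card E) - real (Sigma2 V E)) * g 4"
proof -
  have "(\<lambda>f. Mi E i f * Mi E j f) = (\<lambda>f. \<Sum>(e, e')\<in>E \<times> E.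
      indicator {f. (\<forall>v\<in>e. f v = i) \<and> (\<forall>v\<in>e'. f v = j)} f)"
    by (simp add: Mi_eq_sum_indicator sum_product sum.cartesian_product indicator_inter_arith[symmetric]
        Collect_conj_eq case_prod_unfold)
  then have "measure_pmf.expectation (coloring_pmf V s c) (\<lambda>f. Mi E i f * Mi E j f)
      = (\<Sum>(e, e')\<in>E \<times> E.
          measure_pmf.prob (coloring_pmf V s c) {f. (\<forall>v\<in>e. f v = i) \<and> (\<forall>v\<in>e'. f v = j)})"
    by (simp add: case_prod_unfold)
  also have "\<dots> = (\<Sum>(e, e')\<in>E \<times> E. g (card (e \<union> e')))"
    using prob_edge_pair[OF _ _ i j] by (intro sum.cong refl) (auto simp: g_def)
  finally show ?thesis
    by (simp add: sum_edge_pairs_card_Un[OF graph])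
qed

lemma expectation_Mono:
  "measure_pmf.expectation (coloring_pmf V s c) (Mono E)
     = real (card E) / ffact (card V) 2 * (\<Sum>i=1..s. ffact (c i) 2)"
proof -
  have "measure_pmf.expectation (coloring_pmf V s c) (Mono E)
      = measure_pmf.expectation (coloring_pmf V s c) (\<lambda>f. \<Sum>i=1..s. Mi E i f)"
    by (rule expectation_coloring_pmf_cong) (rule Mono_eq_sum_Mi)
  also have "\<dots> = (\<Sum>i=1..s. real (card E) * ffact (c i) 2 / ffact (card V) 2)"
    using expectation_Mi by simp
  finally show ?thesis
    by (simp add: sum_distrib_left sum_divide_distrib)
qed

lemma expectation_Mono_squared:
  defines "R2 \<equiv> \<Sum>i=1..s. ffact (c i) 2" and "R3 \<equiv> \<Sum>i=1..s. ffact (c i) 3"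
  shows "measure_pmf.expectation (coloring_pmf V s c) (\<lambda>f. Mono E f * Mono E f)
     = real (card E) * (R2 / ffact (card V) 2)
       + (real (Sigma2 V E) - 2 * real (card E)) * (R3 / ffact (card V) 3)
       + (real (card E) ^ 2 + real (card E) - real (Sigma2 V E))
         * ((R2\<^sup>2 - 4 * R3 - 2 * R2) / ffact (card V) 4)"
proof -
  let ?g = "edge_pair_prob (card V) c"
  have "measure_pmf.expectation (coloring_pmf V s c) (\<lambda>f. Mono E f * Mono E f)
      = measure_pmf.expectation (coloring_pmf V s c) (\<lambda>f. \<Sum>i=1..s. \<Sum>j=1..s. Mi E i f * Mi E j f)"
    by (rule expectation_coloring_pmf_cong) (simp add: Mono_eq_sum_Mi sum_product)
  also have "\<dots> = (\<Sum>i=1..s. \<Sum>j=1..s. real (card E) * ?g i j 2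
      + (real (Sigma2 V E) - 2 * real (card E)) * ?g i j 3
      + (real (card E) ^ 2 + real (card E) - real (Sigma2 V E)) * ?g i j 4)"
    using expectation_Mi_mult by simp
  also have "\<dots> = real (card E) * (\<Sum>i=1..s. \<Sum>j=1..s. ?g i j 2)
      + (real (Sigma2 V E) - 2 * real (card E)) * (\<Sum>i=1..s. \<Sum>j=1..s. ?g i j 3)
      + (real (card E) ^ 2 + real (card E) - real (Sigma2 V E)) * (\<Sum>i=1..s. \<Sum>j=1..s. ?g i j 4)"
    by (simp add: sum.distrib sum_distrib_left)
  also have "(\<Sum>i=1..s. \<Sum>j=1..s. ?g i j 2) = R2 / ffact (card V) 2"
    unfolding R2_def by (rule sum_edge_pair_prob_ne_4) simp
  also have "(\<Sum>i=1..s. \<Sum>j=1..s. ?g i j 3) = R3 / ffact (card V) 3"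
    unfolding R3_def by (rule sum_edge_pair_prob_ne_4) simp
  also have "(\<Sum>i=1..s. \<Sum>j=1..s. ?g i j 4) = (R2\<^sup>2 - 4 * R3 - 2 * R2) / ffact (card V) 4"
    unfolding R2_def R3_def by (rule sum_edge_pair_prob_4)
  finally show ?thesis .
qed

lemma sum_class_sizes: "(\<Sum>i=1..s. real (c i)) = real (card V)"
  using composition by (simp add: composition_def flip: of_nat_sum)

lemma esym_2_colors:
  "esym 2 s (\<lambda>i. real (c i)) = (ffact (card V) 2 - (\<Sum>i=1..s. ffact (c i) 2)) / 2"
  unfolding esym_2 sum_class_sizes ffact_2 ..

lemma esym_3_colors:
  "esym 3 s (\<lambda>i. real (c i)) = (ffact (card V) 3 - 3 * (real (card V) - 2) * (\<Sum>i=1..s. ffact (c i) 2)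
     + 2 * (\<Sum>i=1..s. ffact (c i) 3)) / 6"
  unfolding esym_3 sum_class_sizes ffact_3 ..

lemma variance_Mi:
  assumes i: "i \<in> {1..s}" and n4: "card V \<ge> 4"
  defines "n \<equiv> real (card V)" and "m \<equiv> real (card E)" and "S2 \<equiv> real (Sigma2 V E)"
  shows "measure_pmf.variance (coloring_pmf V s c) (Mi E i) =
            ffact (c i) 3 * (n - real (c i)) / ffact n 4 * S2
          - ((ffact (c i) 2 / ffact n 2)^2 - ffact (c i) 4 / ffact n 4) * m^2
          + (ffact (c i) 2 / ffact n 2 - 2 * (ffact (c i) 3 / ffact n 3)
             + ffact (c i) 4 / ffact n 4) * m"
proof -
  let ?p = "\<lambda>u. ffact (c i) u / ffact n u"
  have polynomial_identity: "m * p2 + (S2 - 2 * m) * p3 + (m^2 + m - S2) * p4 - (m * p2)^2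
      = (p3 - p4) * S2 - (p2^2 - p4) * m^2 + (p2 - 2 * p3 + p4) * m" for p2 p3 p4 :: real
    by (simp add: algebra_simps power2_eq_square)
  have "measure_pmf.variance (coloring_pmf V s c) (Mi E i)
      = m * ?p 2 + (S2 - 2 * m) * ?p 3 + (m^2 + m - S2) * ?p 4 - (m * ?p 2)^2"
    by (subst variance_coloring_pmf)
      (simp add: expectation_Mi_mult[OF i i] expectation_Mi[OF i] edge_pair_prob_def n_def m_def S2_def)
  also have "\<dots> = (?p 3 - ?p 4) * S2 - ((?p 2)^2 - ?p 4) * m^2 + (?p 2 - 2 * ?p 3 + ?p 4) * m"
    by (rule polynomial_identity)
  also have "?p 3 - ?p 4 = ffact (c i) 3 * (n - real (c i)) / ffact n 4"
    using n4 by (simp add: n_def ffact_3_div_diff_ffact_4_div)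
  finally show ?thesis by simp
qed

lemma expectation_Bichr:
  assumes n4: "card V \<ge> 4"
  shows "measure_pmf.expectation (coloring_pmf V s c) (Bichr E)
     = 2 * real (card E) * esym 2 s (\<lambda>i. real (c i)) / ffact (real (card V)) 2"
proof -
  let ?n = "real (card V)" and ?m = "real (card E)" and ?R2 = "\<Sum>i=1..s. ffact (c i) 2"
  have "ffact ?n 2 \<noteq> 0"
    using n4 by (simp add: ffact_2)
  have "measure_pmf.expectation (coloring_pmf V s c) (Bichr E) = ?m - ?m / ffact ?n 2 * ?R2"
    unfolding Bichr_eq_diff_Mono by (simp add: expectation_Mono measure_pmf.prob_space)
  also have "\<dots> = ?m * (ffact ?n 2 - ?R2) / ffact ?n 2"
    using \<open>ffact ?n 2 \<noteq> 0\<close> by (simp add: field_simps)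
  finally show ?thesis
    by (simp add: esym_2_colors)
qed

lemma variance_Mono:
  assumes n4: "card V \<ge> 4"
  defines "n \<equiv> real (card V)" and "m \<equiv> real (card E)" and "S2 \<equiv> real (Sigma2 V E)"
    and "e2 \<equiv> esym 2 s (\<lambda>i. real (c i))" and "e3 \<equiv> esym 3 s (\<lambda>i. real (c i))"
  defines "a \<equiv> e2 / ffact n 2 + 3 * e3 / ffact n 3"
    and "b \<equiv> 4 / ffact n 4 * (e2^2 - (n - 1) * e2 - 3 * e3)"
  shows "measure_pmf.variance (coloring_pmf V s c) (Mono E)
     = (a - b) * S2 + m^2 * (b - 4 * (e2 / ffact n 2)^2) + m * (2 * e2 / ffact n 2 - 2 * a + b)"
proof -
  define R2 where "R2 = (\<Sum>i=1..s. ffact (c i) 2)"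
  define R3 where "R3 = (\<Sum>i=1..s. ffact (c i) 3)"
  define X where "X = R2 / ffact n 2"
  define Y where "Y = R3 / ffact n 3"
  define K where "K = (R2\<^sup>2 - 4 * R3 - 2 * R2) / ffact n 4"
  have "n \<ge> 4" using n4 by (simp add: n_def)
  have e2_eq: "e2 = (ffact n 2 - R2) / 2" and e3_eq: "e3 = (ffact n 3 - 3 * (n - 2) * R2 + 2 * R3) / 6"
    unfolding e2_def e3_def esym_2_colors esym_3_colors n_def R2_def R3_def by simp_all
  have e2: "e2 / ffact n 2 = (1 - X) / 2"
    using esym_coefficients(1)[OF \<open>n \<ge> 4\<close>, where p = R2] unfolding X_def e2_eq .
  have a: "a = 1 - 2 * X + Y" and b: "b = K + 1 - 2 * X"
    using esym_coefficients(2,3)[OF \<open>n \<ge> 4\<close>, where p = R2 and q = R3]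
    unfolding a_def b_def X_def Y_def K_def e2_eq e3_eq by simp_all
  have "measure_pmf.variance (coloring_pmf V s c) (Mono E)
      = m * X + (S2 - 2 * m) * Y + (m^2 + m - S2) * K - (m * X)^2"
    by (subst variance_coloring_pmf)
      (simp add: expectation_Mono_squared expectation_Mono X_def Y_def K_def R2_def R3_def n_def m_def S2_def)
  also have "\<dots> = (a - b) * S2 + m^2 * (b - 4 * (e2 / ffact n 2)^2) + m * (2 * (e2 / ffact n 2) - 2 * a + b)"
    unfolding a b e2 by (simp add: field_simps power2_eq_square)
  finally show ?thesis by simp
qed

lemma variance_Bichr:
  "measure_pmf.variance (coloring_pmf V s c) (Bichr E) = measure_pmf.variance (coloring_pmf V s c) (Mono E)"
  unfolding Bichr_eq_diff_Mono by (rule measure_pmf.variance_const_diff) simp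

end

theorem theorem2p3:
  fixes V :: "'a set" and E :: "'a set set" and s :: nat and c :: "nat \<Rightarrow> nat"
  assumes G: "simple_graph V E"
    and comp: "composition (card V) s c"
    and n4: "card V \<ge> 4"
  defines "n \<equiv> real (card V)" and "m \<equiv> real (card E)"
    and "P \<equiv> coloring_pmf V s c"
    and "e2 \<equiv> esym 2 s (\<lambda>i. real (c i))" and "e3 \<equiv> esym 3 s (\<lambda>i. real (c i))"
    and "S2 \<equiv> real (Sigma2 V E)"
  defines "a \<equiv> e2 / ffact n 2 + 3 * e3 / ffact n 3"
    and "b \<equiv> 4 / ffact n 4 * (e2^2 - (n - 1) * e2 - 3 * e3)"
  shows
    "(\<forall>i\<in>{1..s}.
        measure_pmf.expectation P (Mi E i) = m * ffact (c i) 2 / ffact n 2 \<and>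
        measure_pmf.variance P (Mi E i) =
            ffact (c i) 3 * (n - real (c i)) / ffact n 4 * S2
          - ((ffact (c i) 2 / ffact n 2)^2 - ffact (c i) 4 / ffact n 4) * m^2
          + (ffact (c i) 2 / ffact n 2 - 2 * (ffact (c i) 3 / ffact n 3)
             + ffact (c i) 4 / ffact n 4) * m)
     \<and> measure_pmf.expectation P (Bichr E) = 2 * m * e2 / ffact n 2
     \<and> measure_pmf.expectation P (Mono E) = m / ffact n 2 * (\<Sum>i=1..s. ffact (c i) 2)
     \<and> measure_pmf.variance P (Bichr E) =
          (a - b) * S2 + m^2 * (b - 4 * (e2 / ffact n 2)^2) + m * (2 * e2 / ffact n 2 - 2 * a + b)
     \<and> measure_pmf.variance P (Mono E) =
          (a - b) * S2 + m^2 * (b - 4 * (e2 / ffact n 2)^2) + m * (2 * e2 / ffact n 2 - 2 * a + b)"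
proof -
  interpret colored_graph V s c E
    using G comp by unfold_locales (simp_all add: simple_graph_def)
  show ?thesis
    unfolding n_def m_def P_def e2_def e3_def S2_def a_def b_def
    using expectation_Mi variance_Mi[OF _ n4] expectation_Bichr[OF n4] expectation_Mono
      variance_Mono[OF n4] trans[OF variance_Bichr variance_Mono[OF n4]]
    by blast
qed

end
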